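(* For every integer $m \ge 3$ and every $\alpha \in [0,1]$, the rule \textsc{PluralityMatching} has distortion exactly $2+\alpha$ on $\alpha$-decisive metric spaces. More precisely: (i) for every election $(V,C,\sigma)$ with $|C|=m$, every $\alpha$-decisive distance function $d$ consistent with $\sigma$, every candidate $a$ whose integral domination graph $G(a)$ admits a perfect matching, and every candidate $b \in C$, we have $\mathrm{SC}(a) \le (2+\alpha)\,\mathrm{SC}(b)$; and (ii) this bound is tight: the supremum, over all elections with $m$ candidates, all $\alpha$-decisive distance functions $d$ consistent with the profile, and all candidates $a$ that \textsc{PluralityMatching} may return (i.e.\ whose $G(a)$ admits a perfect matching), of $\mathrm{SC}(a)/\min_{c\in C}\mathrm{SC}(c)$ equals $2+\alpha$.
   Context: An election consists of a set of voters $V=\{1,\dots,n\}$ ($n\ge 1$), a finite set $C$ of $m$ candidates, and a preference profile $\sigma=(\sigma_i)_{i\in V}$, where each $\sigma_i$ is a linear order over $C$; write $c \succ_i c'$ if $i$ ranks $c$ above $c'$, and $c \succeq_i c'$ if $c=c'$ or $c\succ_i c'$. Voters and candidates are located at points of a metric space; equivalently, we have a distance function $d$ on $V\cup C$ that is nonnegative, symmetric and satisfies the triangle inequality (distinct voters/candidates may be co-located, i.e.\ at distance $0$). $d$ is consistent with $\sigma$ if $d(i,c)\le d(i,c')$ whenever $c\succ_i c'$. $\mathrm{top}(i)$ is the candidate ranked first by $i$. The social cost of $c$ is $\mathrm{SC}(c)=\sum_{i\in V} d(i,c)$. For $\alpha\in[0,1]$, $d$ is $\alpha$-decisive if for every voter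 $i$, $d(i,\mathrm{top}(i))\le \alpha\, d(i,c)$ for all $c\ne \mathrm{top}(i)$. The distortion of a (possibly randomized) social choice rule $f$ (mapping profiles of any number of voters over the fixed candidate set $C$ to distributions over $C$) on $\alpha$-decisive metric spaces is $\sup_{\sigma}\sup_{d} \mathbb{E}[\mathrm{SC}(f(\sigma))]/\min_{c\in C}\mathrm{SC}(c)$, where $d$ ranges over $\alpha$-decisive distance functions consistent with $\sigma$. The integral domination graph of candidate $a$ is the bipartite graph $G(a)$ with both vertex sides equal to (copies of) $V$, and an edge between $i$ (left) and $j$ (right) iff $a \succeq_i \mathrm{top}(j)$. The rule \textsc{PluralityMatching} returns an arbitrary candidate $a$ whose integral domination graph $G(a)$ admits a perfect matching (such a candidate always exists). *)

theory Defs
  imports Complex_Main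
begin

text \<open>Voters and candidates are natural numbers; the points of the (pseudo)metric
  space are elements of nat + nat: Inl i is voter i, Inr c is candidate c.
  A profile P assigns to each voter i a linear order P i on C (as a set of pairs);
  (c, c') in P i means c is weakly preferred to c' by i.\<close>

type_synonym profile = "nat \<Rightarrow> (nat \<times> nat) set"
type_synonym distance = "nat + nat \<Rightarrow> nat + nat \<Rightarrow> real"

definition profile_on :: "nat set \<Rightarrow> nat set \<Rightarrow> profile \<Rightarrow> bool" where
  "profile_on V C P \<longleftrightarrow> (\<forall>i\<in>V. linear_order_on C (P i))"

definition top :: "profile \<Rightarrow> nat set \<Rightarrow> nat \<Rightarrow> nat" where
  "top P C i = (THE c. c \<in> C \<and> (\<forall>c'\<in>C. (c, c') \<in> P i))"

definition is_metric_on :: "'a set \<Rightarrow> ('a \<Rightarrow> 'a \<Rightarrow> real) \<Rightarrow> bool" where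
  "is_metric_on X d \<longleftrightarrow>
     (\<forall>x\<in>X. d x x = 0) \<and>
     (\<forall>x\<in>X. \<forall>y\<in>X. 0 \<le> d x y \<and> d x y = d y x) \<and>
     (\<forall>x\<in>X. \<forall>y\<in>X. \<forall>z\<in>X. d x z \<le> d x y + d y z)"

definition consistent :: "nat set \<Rightarrow> nat set \<Rightarrow> profile \<Rightarrow> distance \<Rightarrow> bool" where
  "consistent V C P d \<longleftrightarrow>
     (\<forall>i\<in>V. \<forall>c\<in>C. \<forall>c'\<in>C. (c, c') \<in> P i \<and> c \<noteq> c' \<longrightarrow> d (Inl i) (Inr c) \<le> d (Inl i) (Inr c'))"

definition decisive :: "real \<Rightarrow> nat set \<Rightarrow> nat set \<Rightarrow> profile \<Rightarrow> distance \<Rightarrow> bool" where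
  "decisive \<alpha> V C P d \<longleftrightarrow>
     (\<forall>i\<in>V. \<forall>c\<in>C. c \<noteq> top P C i \<longrightarrow> d (Inl i) (Inr (top P C i)) \<le> \<alpha> * d (Inl i) (Inr c))"

definition admissible :: "real \<Rightarrow> nat set \<Rightarrow> nat set \<Rightarrow> profile \<Rightarrow> distance \<Rightarrow> bool" where
  "admissible \<alpha> V C P d \<longleftrightarrow>
     is_metric_on (Inl ` V \<union> Inr ` C) d \<and> consistent V C P d \<and> decisive \<alpha> V C P d"

definition SC :: "nat set \<Rightarrow> distance \<Rightarrow> nat \<Rightarrow> real" where
  "SC V d c = (\<Sum>i\<in>V. d (Inl i) (Inr c))"

definition dom_edge :: "profile \<Rightarrow> nat set \<Rightarrow> nat \<Rightarrow> nat \<Rightarrow> nat \<Rightarrow> bool" where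
  "dom_edge P C a i j \<longleftrightarrow> (a, top P C j) \<in> P i"

definition has_perfect_matching :: "nat set \<Rightarrow> nat set \<Rightarrow> profile \<Rightarrow> nat \<Rightarrow> bool" where
  "has_perfect_matching V C P a \<longleftrightarrow>
     (\<exists>\<pi>. bij_betw \<pi> V V \<and> (\<forall>i\<in>V. dom_edge P C a i (\<pi> i)))"

end

theory Submission
  imports Defs
begin

text \<open>Upper bound: let \<pi> be a perfect matching of G(a) and t = top(\<pi> i). Voter i weakly prefers
  a to t, and \<alpha>-decisiveness of \<pi> i gives d(\<pi> i,t) \<le> \<alpha> d(\<pi> i,b), so
  d(i,a) \<le> d(i,t) \<le> d(i,b) + d(b,\<pi> i) + d(\<pi> i,t) \<le> d(i,b) + (1 + \<alpha>) d(\<pi> i,b).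
  Summing over i, and using that \<pi> is a bijection, gives SC(a) \<le> (2 + \<alpha>) SC(b).

  Tightness: two voters, voter 1 ranking 0 > 1 > ... > m-1 and voter 2 the reverse order.
  Candidate 1 is matched (1 to 2, 2 to 1), and the taxicab plane realises
  d(1,\<cdot>) = (0, 1+\<alpha>, ..., 1+\<alpha>) and d(2,\<cdot>) = (1, 1, ..., 1, \<alpha>), so SC(1) = 2 + \<alpha> while SC(0) = 1.\<close>

lemma linear_order_on_has_first:
  assumes "linear_order_on C r" "finite F" "F \<noteq> {}" "F \<subseteq> C"
  shows "\<exists>c\<in>F. \<forall>c'\<in>F. (c, c') \<in> r"
  using assms(2-4)
proof (induction F rule: finite_ne_induct)
  case (singleton x)
  then show ?case using assms(1) by (auto simp: order_on_defs refl_on_def)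
next
  case (insert x F)
  then obtain c where c: "c \<in> F" "\<forall>c'\<in>F. (c, c') \<in> r" by blast
  have "x \<in> C" "c \<in> C" using insert.prems c(1) by auto
  then have "(x, x) \<in> r" "(x, c) \<in> r \<or> (c, x) \<in> r"
    using assms(1) unfolding order_on_defs refl_on_def total_on_def by (metis, metis)
  moreover have "trans r" using assms(1) by (simp add: order_on_defs)
  ultimately show ?case using c by (auto dest: transD)
qed

lemma top_eqI:
  assumes "c \<in> C" "\<forall>c'\<in>C. (c, c') \<in> P i" "antisym (P i)"
  shows "top P C i = c"
  unfolding Defs.top_def
proof (rule the_equality)
  show "\<And>c'. c' \<in> C \<and> (\<forall>c''\<in>C. (c', c'') \<in> P i) \<Longrightarrow> c' = c"
    using assms by (auto dest: antisymD)
qed (use assms in blast)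

lemma top_first:
  assumes "finite C" "C \<noteq> {}" "linear_order_on C (P i)"
  shows "top P C i \<in> C" "\<forall>c'\<in>C. (top P C i, c') \<in> P i"
proof -
  obtain c where c: "c \<in> C" "\<forall>c'\<in>C. (c, c') \<in> P i"
    using linear_order_on_has_first[OF assms(3,1,2)] by blast
  moreover have "antisym (P i)" using assms(3) by (simp add: order_on_defs)
  ultimately have "top P C i = c" by (rule top_eqI)
  then show "top P C i \<in> C" "\<forall>c'\<in>C. (top P C i, c') \<in> P i" using c by simp_all
qed

lemma is_metric_onD:
  assumes "is_metric_on X d" "x \<in> X" "y \<in> X" "z \<in> X"
  shows "0 \<le> d x y" "d x y = d y x" "d x z \<le> d x y + d y z"
  using assms unfolding is_metric_on_def by blast+

lemma dist_le_via_matched_voter: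
  assumes "finite C" "profile_on V C P" "admissible \<alpha> V C P d" "0 \<le> \<alpha>"
    and "a \<in> C" "b \<in> C" "i \<in> V" "j \<in> V" "dom_edge P C a i j"
  shows "d (Inl i) (Inr a) \<le> d (Inl i) (Inr b) + (1 + \<alpha>) * d (Inl j) (Inr b)"
proof -
  define t where "t = top P C j"
  have "t \<in> C" using top_first(1)[of C P j] assms unfolding t_def profile_on_def by blast
  have metric: "is_metric_on (Inl ` V \<union> Inr ` C) d"
    using assms(3) by (simp add: admissible_def)
  have "d (Inl i) (Inr a) \<le> d (Inl i) (Inr t)"
    using assms(3,5,7,9) \<open>t \<in> C\<close> unfolding admissible_def consistent_def dom_edge_def t_def
    by (cases "a = t") auto
  moreover have "d (Inl i) (Inr t) \<le> d (Inl i) (Inr b) + (1 + \<alpha>) * d (Inl j) (Inr b)"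
  proof (cases "b = t")
    case True
    have "0 \<le> d (Inl j) (Inr b)" using is_metric_onD(1)[OF metric] assms(6,8) by blast
    then show ?thesis using assms(4) unfolding True by simp
  next
    case False
    have "d (Inl j) (Inr t) \<le> \<alpha> * d (Inl j) (Inr b)"
      using assms(3,6,8) False unfolding admissible_def decisive_def t_def by metis
    moreover have "d (Inl i) (Inr t) \<le> d (Inl i) (Inr b) + d (Inr b) (Inr t)"
      and "d (Inr b) (Inr t) \<le> d (Inr b) (Inl j) + d (Inl j) (Inr t)"
      using is_metric_onD(3)[OF metric] assms(6-8) \<open>t \<in> C\<close> by blast+
    moreover have "d (Inr b) (Inl j) = d (Inl j) (Inr b)"
      using is_metric_onD(2)[OF metric] assms(6,8) by blast
    ultimately show ?thesis by (simp add: algebra_simps)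
  qed
  ultimately show ?thesis by linarith
qed

lemma plurality_matching_SC_le:
  assumes "finite C" "profile_on V C P" "admissible \<alpha> V C P d" "0 \<le> \<alpha>"
    and "a \<in> C" "has_perfect_matching V C P a" "b \<in> C"
  shows "SC V d a \<le> (2 + \<alpha>) * SC V d b"
proof -
  obtain \<pi> where bij: "bij_betw \<pi> V V" and edge: "\<forall>i\<in>V. dom_edge P C a i (\<pi> i)"
    using assms(6) unfolding has_perfect_matching_def by blast
  have "SC V d a \<le> (\<Sum>i\<in>V. d (Inl i) (Inr b) + (1 + \<alpha>) * d (Inl (\<pi> i)) (Inr b))"
    unfolding SC_def
    using dist_le_via_matched_voter[OF assms(1-5,7)] edge bij_betwE[OF bij]
    by (intro sum_mono) blast
  also have "\<dots> = SC V d b + (1 + \<alpha>) * (\<Sum>i\<in>V. d (Inl (\<pi> i)) (Inr b))"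
    unfolding SC_def by (simp add: sum.distrib sum_distrib_left)
  also have "(\<Sum>i\<in>V. d (Inl (\<pi> i)) (Inr b)) = SC V d b"
    unfolding SC_def using sum.reindex_bij_betw[OF bij] by simp
  finally show ?thesis by (simp add: algebra_simps)
qed

lemma plurality_matching_ratio_le:
  assumes "finite C" "profile_on V C P" "admissible \<alpha> V C P d" "0 \<le> \<alpha>"
    and "a \<in> C" "has_perfect_matching V C P a" "0 < Min (SC V d ` C)"
  shows "SC V d a / Min (SC V d ` C) \<le> 2 + \<alpha>"
proof -
  have "Min (SC V d ` C) \<in> SC V d ` C" using assms(1,5) by (intro Min_in) auto
  then obtain b where "b \<in> C" and b: "Min (SC V d ` C) = SC V d b" by blast
  then have "SC V d a \<le> (2 + \<alpha>) * Min (SC V d ` C)"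
    using plurality_matching_SC_le[OF assms(1-6)] by simp
  then show ?thesis using assms(7) by (simp add: pos_divide_le_eq)
qed

definition nat_order_on :: "nat set \<Rightarrow> (nat \<times> nat) set" where
  "nat_order_on C = {(x, y). x \<in> C \<and> y \<in> C \<and> x \<le> y}"

lemma linear_order_on_nat_order_on: "linear_order_on C (nat_order_on C)"
  by (auto simp: nat_order_on_def order_on_defs refl_on_def trans_def antisym_def total_on_def)

definition taxicab_dist :: "real \<times> real \<Rightarrow> real \<times> real \<Rightarrow> real" where
  "taxicab_dist p q = \<bar>fst p - fst q\<bar> + \<bar>snd p - snd q\<bar>"

lemma is_metric_on_taxicab_dist: "is_metric_on X (\<lambda>x y. taxicab_dist (f x) (f y))"
  unfolding is_metric_on_def taxicab_dist_def by auto

definition tight_profile :: "nat set \<Rightarrow> profile" where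
  "tight_profile C i = (if i = 1 then nat_order_on C else (nat_order_on C)\<inverse>)"

definition tight_location :: "nat \<Rightarrow> real \<Rightarrow> nat + nat \<Rightarrow> real \<times> real" where
  "tight_location m \<alpha> x = (case x of
       Inl i \<Rightarrow> if i = 2 then (1, 0) else (0, 0)
     | Inr c \<Rightarrow> if c = 0 then (0, 0) else if c = m - 1 then (1 + \<alpha>, 0)
               else ((1 + \<alpha>) / 2, (1 + \<alpha>) / 2))"

definition tight_dist :: "nat \<Rightarrow> real \<Rightarrow> distance" where
  "tight_dist m \<alpha> x y = taxicab_dist (tight_location m \<alpha> x) (tight_location m \<alpha> y)"

lemma tight_voters: "{1..2::nat} = {1, 2}"
  by auto

context
  fixes m :: nat and \<alpha> :: real
  assumes m: "3 \<le> m" and \<alpha>: "0 \<le> \<alpha>" "\<alpha> \<le> 1"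
begin

lemma tight_profile_on: "profile_on {1..2} {0..<m} (tight_profile {0..<m})"
  by (simp add: profile_on_def tight_profile_def linear_order_on_nat_order_on)

lemma tight_top: "top (tight_profile {0..<m}) {0..<m} i = (if i = 1 then 0 else m - 1)"
  using m by (intro top_eqI) (auto simp: tight_profile_def nat_order_on_def antisym_def)

lemma tight_dist_voter: "tight_dist m \<alpha> (Inl i) (Inr c) =
    (if i = 2 then (if c = m - 1 then \<alpha> else 1) else (if c = 0 then 0 else 1 + \<alpha>))"
  using m \<alpha> by (simp add: tight_dist_def tight_location_def taxicab_dist_def)

lemma tight_admissible: "admissible \<alpha> {1..2} {0..<m} (tight_profile {0..<m}) (tight_dist m \<alpha>)"
proof -
  have "consistent {1..2} {0..<m} (tight_profile {0..<m}) (tight_dist m \<alpha>)"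
    using \<alpha> unfolding consistent_def tight_voters
    by (auto simp: tight_dist_voter tight_profile_def nat_order_on_def)
  moreover have "decisive \<alpha> {1..2} {0..<m} (tight_profile {0..<m}) (tight_dist m \<alpha>)"
    using \<alpha> unfolding decisive_def tight_voters
    by (auto simp: tight_top tight_dist_voter)
  ultimately show ?thesis
    unfolding admissible_def tight_dist_def by (simp add: is_metric_on_taxicab_dist)
qed

lemma tight_has_perfect_matching: "has_perfect_matching {1..2} {0..<m} (tight_profile {0..<m}) 1"
  unfolding has_perfect_matching_def
proof (intro exI conjI)
  show "bij_betw (\<lambda>i. 3 - i) {1..2::nat} {1..2}"
    unfolding tight_voters bij_betw_def by auto
  show "\<forall>i\<in>{1..2}. dom_edge (tight_profile {0..<m}) {0..<m} 1 i (3 - i)"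
    using m unfolding tight_voters dom_edge_def
    by (auto simp: tight_top tight_profile_def nat_order_on_def)
qed

lemma tight_SC: "SC {1..2} (tight_dist m \<alpha>) c =
    (if c = 0 then 0 else 1 + \<alpha>) + (if c = m - 1 then \<alpha> else 1)"
  unfolding SC_def tight_voters by (simp add: tight_dist_voter)

lemma tight_Min_SC: "Min (SC {1..2} (tight_dist m \<alpha>) ` {0..<m}) = 1"
proof (rule Min_eqI)
  show "1 \<in> SC {1..2} (tight_dist m \<alpha>) ` {0..<m}"
  proof (rule rev_image_eqI)
    show "0 \<in> {0..<m}" using m by simp
    show "1 = SC {1..2} (tight_dist m \<alpha>) 0" using m unfolding tight_SC by simp
  qed
  show "1 \<le> y" if y: "y \<in> SC {1..2} (tight_dist m \<alpha>) ` {0..<m}" for y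
  proof -
    obtain c where "y = SC {1..2} (tight_dist m \<alpha>) c" using y by blast
    then show ?thesis using m \<alpha> unfolding tight_SC by auto
  qed
qed simp

lemma tight_ratio: "SC {1..2} (tight_dist m \<alpha>) 1 / Min (SC {1..2} (tight_dist m \<alpha>) ` {0..<m}) = 2 + \<alpha>"
  using m unfolding tight_Min_SC tight_SC by auto

end

theorem theorem1:
  fixes m :: nat and \<alpha> :: real
  assumes "m \<ge> 3" and "0 \<le> \<alpha>" and "\<alpha> \<le> 1"
  shows "(\<forall>(n::nat) (C::nat set) (P::profile) (d::distance) (a::nat) (b::nat).
            1 \<le> n \<and> finite C \<and> card C = m \<and> profile_on {1..n} C P \<and>
            admissible \<alpha> {1..n} C P d \<and> a \<in> C \<and> has_perfect_matching {1..n} C P a \<and> b \<in> C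
            \<longrightarrow> SC {1..n} d a \<le> (2 + \<alpha>) * SC {1..n} d b)
       \<and> Sup {SC {1..n} d a / Min (SC {1..n} d ` C) | (n::nat) (C::nat set) (P::profile) (d::distance) (a::nat).
            1 \<le> n \<and> finite C \<and> card C = m \<and> profile_on {1..n} C P \<and>
            admissible \<alpha> {1..n} C P d \<and> a \<in> C \<and> has_perfect_matching {1..n} C P a \<and>
            0 < Min (SC {1..n} d ` C)} = 2 + \<alpha>"
    (is "?bound \<and> Sup ?ratios = _")
proof
  show ?bound using plurality_matching_SC_le assms(2) by blast
  show "Sup ?ratios = 2 + \<alpha>"
  proof (rule cSup_eq_maximum)
    have "0 < Min (SC {1..2} (tight_dist m \<alpha>) ` {0..<m})"
      using tight_Min_SC[OF assms] by simp
    then show "2 + \<alpha> \<in> ?ratios"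
      using assms tight_profile_on tight_admissible tight_has_perfect_matching tight_ratio
      by (intro CollectI exI[of _ 2] exI[of _ "{0..<m}"] exI[of _ "tight_profile {0..<m}"]
          exI[of _ "tight_dist m \<alpha>"] exI[of _ 1]) auto
    show "x \<le> 2 + \<alpha>" if "x \<in> ?ratios" for x
      using that plurality_matching_ratio_le assms(2) by blast
  qed
qed

end
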